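(* Let $R$ be a commutative ring and $n$ a positive integer. Then the formal power series ring $R[[x]]$ is $n$-strongly clean if and only if $R$ is $n$-strongly clean.
   Context: All rings are associative with identity. For a positive integer $n$, an element $x \in R$ is $n$-strongly clean if $x = e + u_1 + \cdots + u_n$ where $e^2=e$, $u_1,\dots,u_n$ are units of $R$, and $eu_i = u_i e$ for all $i$; $R$ is $n$-strongly clean if every element of $R$ is $n$-strongly clean. *)

theory Defs
  imports "HOL-Computational_Algebra.Formal_Power_Series"
begin

definition ring_unit :: "'a::ring_1 \<Rightarrow> bool" where
  "ring_unit u \<longleftrightarrow> (\<exists>v. u * v = 1 \<and> v * u = 1)"

text \<open>x is n-strongly clean: x = e + u_1 + ... + u_n with e idempotent,
  the u_i units, and e commuting with each u_i (indices 0..n-1 here).\<close>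
definition n_strongly_clean_elem :: "nat \<Rightarrow> 'a::ring_1 \<Rightarrow> bool" where
  "n_strongly_clean_elem n x \<longleftrightarrow>
     (\<exists>e u. e * e = e \<and> (\<forall>i<n. ring_unit (u i) \<and> e * u i = u i * e)
            \<and> x = e + (\<Sum>i<n. u i))"

definition n_strongly_clean_ring :: "nat \<Rightarrow> 'a::ring_1 itself \<Rightarrow> bool" where
  "n_strongly_clean_ring n _ \<longleftrightarrow> (\<forall>x::'a. n_strongly_clean_elem n x)"

end

theory Submission
  imports Defs
begin

(* The constant-term map  f \<mapsto> f$0  is a surjective ring homomorphism
   R[[x]] \<rightarrow> R, and homomorphisms carry n-strongly clean decompositions to
   n-strongly clean decompositions; this gives "R[[x]] n-strongly clean \<Longrightarrow> R
   n-strongly clean" by looking at the constant series fps_const r.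
   Conversely, a power series is a unit exactly when its constant term is a unit.  So if
   f$0 = e + u_1 + ... + u_n is a decomposition in R, the series
   e, u_1 + (f - f$0), u_2, ..., u_n (all u_i viewed as constants) decompose f: the
   non-constant part of f is absorbed into the first unit, which needs n \<ge> 1.
   The file proves, in this order: that commutation is automatic in commutative
   rings, the transfer along ring homomorphisms, the unit criterion for power series,
   the lifting of decompositions from constant terms, and finally the theorem. *)

lemma n_strongly_clean_elem_comm:
  fixes x :: "'a::comm_ring_1"
  shows "n_strongly_clean_elem n x \<longleftrightarrow>
         (\<exists>e u. e * e = e \<and> (\<forall>i<n. ring_unit (u i)) \<and> x = e + (\<Sum>i<n. u i))"
  unfolding n_strongly_clean_elem_def by (auto simp: mult.commute)

lemma ring_unit_hom:
  fixes h :: "'a::ring_1 \<Rightarrow> 'b::ring_1"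
  assumes one: "h 1 = 1" and mult: "\<And>a b. h (a * b) = h a * h b"
    and unit: "ring_unit u"
  shows "ring_unit (h u)"
proof -
  from unit obtain v where "u * v = 1" "v * u = 1"
    unfolding ring_unit_def by blast
  then have "h u * h v = 1" "h v * h u = 1"
    by (metis one mult)+
  then show ?thesis
    unfolding ring_unit_def by blast
qed

lemma n_strongly_clean_elem_hom:
  fixes h :: "'a::ring_1 \<Rightarrow> 'b::ring_1"
  assumes one: "h 1 = 1"
    and add: "\<And>a b. h (a + b) = h a + h b"
    and mult: "\<And>a b. h (a * b) = h a * h b"
    and clean: "n_strongly_clean_elem n x"
  shows "n_strongly_clean_elem n (h x)"
proof -
  from clean obtain e u where
    idem: "e * e = e" and
    units: "\<forall>i<n. ring_unit (u i) \<and> e * u i = u i * e" and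
    x: "x = e + (\<Sum>i<n. u i)"
    unfolding n_strongly_clean_elem_def by blast
  have zero: "h 0 = 0"
    using add[of 0 0] by simp
  have sum: "h (\<Sum>i\<in>S. f i) = (\<Sum>i\<in>S. h (f i))" for f :: "nat \<Rightarrow> 'a" and S
    by (induction S rule: infinite_finite_induct) (simp_all add: zero add)
  have "h e * h e = h e"
    using idem by (metis mult)
  moreover have "\<forall>i<n. ring_unit (h (u i)) \<and> h e * h (u i) = h (u i) * h e"
    using units ring_unit_hom[OF one mult] by (metis mult)
  moreover have "h x = h e + (\<Sum>i<n. h (u i))"
    by (simp add: x add sum)
  ultimately show ?thesis
    unfolding n_strongly_clean_elem_def
    by (intro exI[of _ "h e"] exI[of _ "\<lambda>i. h (u i)"]) simp
qed

lemma fps_ring_unit_iff: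
  fixes f :: "'a::ring_1 fps"
  shows "ring_unit f \<longleftrightarrow> ring_unit (fps_nth f 0)"
proof
  assume "ring_unit f"
  then show "ring_unit (fps_nth f 0)"
    using ring_unit_hom[of "\<lambda>g. fps_nth g 0" f] by simp
next
  assume "ring_unit (fps_nth f 0)"
  then obtain v where v: "fps_nth f 0 * v = 1" "v * fps_nth f 0 = 1"
    unfolding ring_unit_def by blast
  show "ring_unit f"
    unfolding ring_unit_def
    using fps_right_inverse[OF v(1)] fps_left_inverse'[OF v(2) v(1)] by blast
qed

text \<open>Lifting: if the constant term of a power series is n-strongly clean with n \<ge> 1,
  so is the series; its non-constant part is absorbed into the first unit.\<close>
lemma n_strongly_clean_elem_fps_lift:
  fixes f :: "'a::comm_ring_1 fps"
  assumes "n \<ge> 1" and "n_strongly_clean_elem n (fps_nth f 0)"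
  shows "n_strongly_clean_elem n f"
proof -
  from assms(2) obtain e u where
    idem: "e * e = e" and units: "\<forall>i<n. ring_unit (u i)" and f0: "fps_nth f 0 = e + (\<Sum>i<n. u i)"
    unfolding n_strongly_clean_elem_comm by blast
  define g where "g = f - fps_const (fps_nth f 0)"
  define U where "U i = fps_const (u i) + (if i = 0 then g else 0)" for i
  have g0: "fps_nth g 0 = 0"
    by (simp add: g_def)
  have "(\<Sum>i<n. U i) = (\<Sum>i<n. fps_const (u i)) + g"
    using assms(1) by (simp add: U_def sum.distrib)
  also have "(\<Sum>i<n. fps_const (u i)) = fps_const (\<Sum>i<n. u i)"
    by (induction n) simp_all
  finally have "f = fps_const e + (\<Sum>i<n. U i)"
    by (simp add: g_def f0 algebra_simps flip: fps_const_add)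
  moreover have "\<forall>i<n. ring_unit (U i)"
    using units g0 by (simp add: fps_ring_unit_iff U_def)
  moreover have "fps_const e * fps_const e = fps_const e"
    using idem by simp
  ultimately show ?thesis
    unfolding n_strongly_clean_elem_comm by blast
qed

theorem proposition1p5:
  fixes n :: nat
  assumes "n \<ge> 1"
  shows "n_strongly_clean_ring n TYPE('a::comm_ring_1 fps) \<longleftrightarrow>
         n_strongly_clean_ring n TYPE('a)"
proof
  assume fps_clean: "n_strongly_clean_ring n TYPE('a fps)"
  show "n_strongly_clean_ring n TYPE('a)"
    unfolding n_strongly_clean_ring_def
  proof
    fix r :: 'a
    have "n_strongly_clean_elem n (fps_const r)"
      using fps_clean unfolding n_strongly_clean_ring_def by blast
    then show "n_strongly_clean_elem n r"
      using n_strongly_clean_elem_hom[of "\<lambda>f. fps_nth f 0" n "fps_const r"] by simp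
  qed
next
  assume "n_strongly_clean_ring n TYPE('a)"
  then show "n_strongly_clean_ring n TYPE('a fps)"
    unfolding n_strongly_clean_ring_def
    using n_strongly_clean_elem_fps_lift[OF assms] by blast
qed

end
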